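(* For every integer $i\ge1$, as $n\to\infty$, in probability, $$\frac{\#\{w\in W_n:\ s_n(w)=i\}}{nk}\to x_i:=(1+\alpha)\Gamma(2+\alpha)\frac{\Gamma(i)}{\Gamma(2+\alpha+i)} ,$$ where $\alpha=k/\lambda$.
   Context: Preferred attachment affiliation model. Fix a real $\lambda>0$, an integer $k\ge 1$ and an integer $l\ge 0$ with $\lambda\le k+l$. At time $0$ a library contains books $w_1,\dots,w_l$, each with score $1$. For $n=0,1,2,\dots$, step $n+1$ proceeds as follows: $k$ new books $w_{l+nk+1},\dots,w_{l+(n+1)k}$ arrive, each with score $1$; then a customer $v_{n+1}$ arrives and, conditionally on the past and independently over books, downloads each book $w\in W_{n+1}=\{w_1,\dots,w_{l+(n+1)k}\}$ with probability $p_{n+1,s(w)}=\lambda s(w)/(l+(n+1)k+n\lambda)$, where $s(w)$ is the current score of $w$. Every book downloaded by $v_{n+1}$ then has its score increased by $1$. $W_n=\{w_1,\dots,w_{l+nk}\}$ and $s_n(w)$ denotes the score of $w$ after step $n$. *)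

theory Defs
  imports "HOL-Probability.Probability"
begin

fun seq_pmf :: "'a pmf list \<Rightarrow> 'a list pmf" where
  "seq_pmf [] = return_pmf []"
| "seq_pmf (p # ps) = bind_pmf p (\<lambda>x. map_pmf (\<lambda>xs. x # xs) (seq_pmf ps))"

text \<open>A state after step n is the list of scores of books w_1, ..., w_(l+nk), in order.\<close>
definition paa_step :: "real \<Rightarrow> nat \<Rightarrow> nat \<Rightarrow> nat \<Rightarrow> nat list \<Rightarrow> nat list pmf" where
  "paa_step lam k l n s =
     (let s' = s @ replicate k 1;
          D = real (l + (n + 1) * k) + real n * lam
      in seq_pmf (map (\<lambda>sc. map_pmf (\<lambda>b. if b then sc + 1 else sc)
                                      (bernoulli_pmf (lam * real sc / D))) s'))"

primrec paa_state :: "real \<Rightarrow> nat \<Rightarrow> nat \<Rightarrow> nat \<Rightarrow> nat list pmf" where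
  "paa_state lam k l 0 = return_pmf (replicate l 1)"
| "paa_state lam k l (Suc n) = bind_pmf (paa_state lam k l n) (paa_step lam k l n)"

definition num_score :: "nat \<Rightarrow> nat list \<Rightarrow> nat" where
  "num_score i s = length (filter (\<lambda>sc. sc = i) s)"

definition paa_limit :: "real \<Rightarrow> nat \<Rightarrow> nat \<Rightarrow> real" where
  "paa_limit lam k i =
     (let \<alpha> = real k / lam
      in (1 + \<alpha>) * Gamma (2 + \<alpha>) * Gamma (real i) / Gamma (2 + \<alpha> + real i))"

end

theory Submission
  imports Defs
begin

(*
  The argument is the second-moment method.

  1. Generalities on finite pmfs: expectations of products of independent coordinates
     (seq_pmf) are additive, and so are their variances; a Chebyshev-type lemma turns
     "normalised mean converges and normalised variance tends to 0" into convergence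
     in probability.
  2. One step of the process: the conditional mean of the count of score j is an explicit
     affine function of the counts of scores j and j-1, and its conditional variance is
     at most lam*j (a sum of Bernoulli variances).
  3. Consequently the means e_n(j) satisfy a linear recursion, and the variances summed
     over the scores 1..i grow at most linearly in n (the recursion telescopes).
  4. A deterministic lemma on recursions a_(n+1) = (1 - theta/(n+delta)) a_n + b_n with
     b_n -> beta gives a_n/n -> beta/(1+theta); by induction on j, e_n(j)/n -> k x_j,
     using the Gamma-function recursion for x_j.
  5. The main theorem combines 1, 3 and 4.
*)

abbreviation E :: "'a pmf \<Rightarrow> ('a \<Rightarrow> real) \<Rightarrow> real" where
  "E M f \<equiv> measure_pmf.expectation M f"

lemma E_bind:
  assumes "finite (set_pmf M)" "\<And>x. x \<in> set_pmf M \<Longrightarrow> finite (set_pmf (N x))"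
  shows "E (bind_pmf M N) h = E M (\<lambda>x. E (N x) h)"
proof -
  have "E (bind_pmf M N) h = (\<Sum>a\<in>set_pmf M. pmf M a *\<^sub>R E (N a) h)"
    by (rule pmf_expectation_bind) (use assms in auto)
  also have "\<dots> = E M (\<lambda>x. E (N x) h)"
    by (rule integral_measure_pmf[symmetric]) (use assms in auto)
  finally show ?thesis .
qed

text \<open>On a finite pmf every function is integrable, so expectation is linear and monotone.\<close>
lemma E_add: "finite (set_pmf M) \<Longrightarrow> E M (\<lambda>x. f x + g x) = E M f + E M g"
  by (rule Bochner_Integration.integral_add) (auto intro: integrable_measure_pmf_finite)

lemma E_diff: "finite (set_pmf M) \<Longrightarrow> E M (\<lambda>x. f x - g x) = E M f - E M g"
  by (rule Bochner_Integration.integral_diff) (auto intro: integrable_measure_pmf_finite)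

lemma E_affine:
  "finite (set_pmf M) \<Longrightarrow> E M (\<lambda>s. a * f s + b * g s + c) = a * E M f + b * E M g + c"
  by (simp add: E_add)

lemma E_mono:
  "finite (set_pmf M) \<Longrightarrow> (\<And>x. x \<in> set_pmf M \<Longrightarrow> f x \<le> g x) \<Longrightarrow> E M f \<le> E M g"
  by (rule integral_mono_AE) (auto intro: integrable_measure_pmf_finite simp: AE_measure_pmf_iff)

lemma seq_pmf_length: "t \<in> set_pmf (seq_pmf ps) \<Longrightarrow> length t = length ps"
  by (induction ps arbitrary: t) auto

lemma seq_pmf_finite:
  "(\<And>p. p \<in> set ps \<Longrightarrow> finite (set_pmf p)) \<Longrightarrow> finite (set_pmf (seq_pmf ps))"
  by (induction ps) auto

lemma seq_pmf_mean:
  assumes "\<And>p. p \<in> set ps \<Longrightarrow> finite (set_pmf p)"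
  shows "E (seq_pmf ps) (\<lambda>xs. sum_list (map g xs)) = sum_list (map (\<lambda>p. E p g) ps)"
  using assms
proof (induction ps)
  case Nil
  then show ?case by simp
next
  case (Cons p ps)
  have fp: "finite (set_pmf p)" and fs: "finite (set_pmf (seq_pmf ps))"
    using Cons.prems by (auto intro: seq_pmf_finite)
  have "E (seq_pmf (p # ps)) (\<lambda>xs. sum_list (map g xs))
      = E p (\<lambda>x. E (seq_pmf ps) (\<lambda>xs. g x + sum_list (map g xs)))"
    by (simp add: E_bind fp fs)
  also have "\<dots> = E p (\<lambda>x. g x + sum_list (map (\<lambda>p. E p g) ps))"
    using Cons by (simp add: E_add fs)
  also have "\<dots> = E p g + sum_list (map (\<lambda>p. E p g) ps)"
    by (simp add: E_add fp)
  finally show ?case by simp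
qed

lemma seq_pmf_variance:
  assumes "\<And>p. p \<in> set ps \<Longrightarrow> finite (set_pmf p)"
  shows "E (seq_pmf ps) (\<lambda>xs. (sum_list (map g xs) - sum_list (map (\<lambda>p. E p g) ps))\<^sup>2)
     = sum_list (map (\<lambda>p. E p (\<lambda>x. (g x - E p g)\<^sup>2)) ps)"
  using assms
proof (induction ps)
  case Nil
  then show ?case by simp
next
  case (Cons p ps)
  have fp: "finite (set_pmf p)" and fs: "finite (set_pmf (seq_pmf ps))"
    using Cons.prems by (auto intro: seq_pmf_finite)
  define \<mu> where "\<mu> = E p g"
  define \<nu> where "\<nu> = sum_list (map (\<lambda>p. E p g) ps)"
  define V where "V = sum_list (map (\<lambda>p. E p (\<lambda>x. (g x - E p g)\<^sup>2)) ps)"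
  have centred: "E (seq_pmf ps) (\<lambda>xs. sum_list (map g xs) - \<nu>) = 0"
    using seq_pmf_mean[of ps g] Cons.prems by (simp add: E_diff fs \<nu>_def)
  have IH: "E (seq_pmf ps) (\<lambda>xs. (sum_list (map g xs) - \<nu>)\<^sup>2) = V"
    using Cons by (simp add: \<nu>_def V_def)
  have inner: "E (seq_pmf ps) (\<lambda>xs. ((g x - \<mu>) + (sum_list (map g xs) - \<nu>))\<^sup>2)
      = (g x - \<mu>)\<^sup>2 + V" for x
  proof -
    have "E (seq_pmf ps) (\<lambda>xs. ((g x - \<mu>) + (sum_list (map g xs) - \<nu>))\<^sup>2)
      = E (seq_pmf ps) (\<lambda>xs. (g x - \<mu>)\<^sup>2 + (2 * (g x - \<mu>) * (sum_list (map g xs) - \<nu>)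
            + (sum_list (map g xs) - \<nu>)\<^sup>2))"
      by (simp add: power2_eq_square algebra_simps)
    also have "\<dots> = (g x - \<mu>)\<^sup>2
        + (2 * (g x - \<mu>) * E (seq_pmf ps) (\<lambda>xs. sum_list (map g xs) - \<nu>) + V)"
      by (simp add: E_add fs IH)
    finally show ?thesis using centred by simp
  qed
  have "E (seq_pmf (p # ps))
          (\<lambda>xs. (sum_list (map g xs) - sum_list (map (\<lambda>p. E p g) (p # ps)))\<^sup>2)
      = E p (\<lambda>x. E (seq_pmf ps) (\<lambda>xs. ((g x - \<mu>) + (sum_list (map g xs) - \<nu>))\<^sup>2))"
    by (simp add: E_bind fp fs \<mu>_def \<nu>_def algebra_simps)
  also have "\<dots> = E p (\<lambda>x. (g x - \<mu>)\<^sup>2) + V"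
    by (simp add: inner E_add fp)
  finally show ?case by (simp add: \<mu>_def V_def)
qed

section \<open>Convergence in probability by the second-moment method\<close>

lemma second_moment_method_convergence:
  fixes M :: "nat \<Rightarrow> 'a pmf" and X :: "nat \<Rightarrow> 'a \<Rightarrow> real" and c :: "nat \<Rightarrow> real"
  assumes fin: "\<And>n. finite (set_pmf (M n))"
    and pos: "eventually (\<lambda>n. c n > 0) sequentially"
    and mean: "(\<lambda>n. E (M n) (X n) / c n) \<longlonglongrightarrow> x"
    and var: "(\<lambda>n. measure_pmf.variance (M n) (X n) / (c n)\<^sup>2) \<longlonglongrightarrow> 0"
    and \<epsilon>: "\<epsilon> > 0"
  shows "(\<lambda>n. measure_pmf.prob (M n) {s. \<bar>X n s / c n - x\<bar> > \<epsilon>}) \<longlonglongrightarrow> 0"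
proof -
  have close: "eventually (\<lambda>n. \<bar>E (M n) (X n) / c n - x\<bar> < \<epsilon> / 2) sequentially"
    using tendstoD[OF mean, of "\<epsilon> / 2"] \<epsilon> by (simp add: dist_real_def)
  have bound: "eventually (\<lambda>n. measure_pmf.prob (M n) {s. \<bar>X n s / c n - x\<bar> > \<epsilon>}
      \<le> 4 / \<epsilon>\<^sup>2 * (measure_pmf.variance (M n) (X n) / (c n)\<^sup>2)) sequentially"
    using close pos
  proof eventually_elim
    case (elim n)
    define \<mu> where "\<mu> = E (M n) (X n)"
    have deviation: "{s. \<bar>X n s / c n - x\<bar> > \<epsilon>}
        \<subseteq> {s \<in> space (measure_pmf (M n)). \<epsilon> / 2 * c n \<le> \<bar>X n s - \<mu>\<bar>}"
    proof
      fix s assume "s \<in> {s. \<bar>X n s / c n - x\<bar> > \<epsilon>}"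
      then have "\<bar>X n s / c n - x\<bar> > \<epsilon>" by simp
      then have "\<epsilon> / 2 < \<bar>X n s / c n - \<mu> / c n\<bar>"
        using elim(1) unfolding \<mu>_def by linarith
      also have "\<bar>X n s / c n - \<mu> / c n\<bar> = \<bar>X n s - \<mu>\<bar> / c n"
        using elim(2) by (simp add: diff_divide_distrib[symmetric])
      finally show "s \<in> {s \<in> space (measure_pmf (M n)). \<epsilon> / 2 * c n \<le> \<bar>X n s - \<mu>\<bar>}"
        using elim(2) by (simp add: pos_less_divide_eq)
    qed
    have "measure_pmf.prob (M n) {s. \<bar>X n s / c n - x\<bar> > \<epsilon>}
        \<le> measure_pmf.prob (M n) {s \<in> space (measure_pmf (M n)). \<epsilon> / 2 * c n \<le> \<bar>X n s - \<mu>\<bar>}"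
      by (rule measure_pmf.finite_measure_mono[OF deviation]) simp
    also have "\<dots> \<le> measure_pmf.variance (M n) (X n) / (\<epsilon> / 2 * c n)\<^sup>2"
      unfolding \<mu>_def using \<epsilon> elim(2)
      by (intro measure_pmf.Chebyshev_inequality) (auto intro: integrable_measure_pmf_finite fin)
    also have "\<dots> = 4 / \<epsilon>\<^sup>2 * (measure_pmf.variance (M n) (X n) / (c n)\<^sup>2)"
      by (simp add: power2_eq_square field_simps)
    finally show ?case .
  qed
  have "(\<lambda>n. 4 / \<epsilon>\<^sup>2 * (measure_pmf.variance (M n) (X n) / (c n)\<^sup>2)) \<longlonglongrightarrow> 4 / \<epsilon>\<^sup>2 * 0"
    by (intro tendsto_intros var)
  then show ?thesis
    by (intro tendsto_sandwich[OF _ bound tendsto_const]) auto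
qed

section \<open>Two deterministic recursions\<close>

lemma contraction_recursion_sublinear:
  fixes u c \<epsilon> :: "nat \<Rightarrow> real"
  assumes rec: "eventually (\<lambda>n. u (Suc n) = c n * u n + \<epsilon> n \<and> \<bar>c n\<bar> \<le> 1) sequentially"
    and perturbation: "\<epsilon> \<longlonglongrightarrow> 0"
  shows "(\<lambda>n. u n / real n) \<longlonglongrightarrow> 0"
proof -
  have "eventually (\<lambda>n. \<bar>u n / real n\<bar> < r) sequentially" if r: "r > 0" for r
  proof -
    have "eventually (\<lambda>n. \<bar>\<epsilon> n\<bar> < r / 2) sequentially"
      using tendstoD[OF perturbation, of "r / 2"] r by simp
    with rec obtain N where N: "\<And>n. n \<ge> N \<Longrightarrow>
        u (Suc n) = c n * u n + \<epsilon> n \<and> \<bar>c n\<bar> \<le> 1 \<and> \<bar>\<epsilon> n\<bar> < r / 2"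
      unfolding eventually_sequentially by (metis (no_types, lifting) eventually_conj
          eventually_sequentially)
    have growth: "\<bar>u n\<bar> \<le> \<bar>u N\<bar> + real (n - N) * (r / 2)" if "n \<ge> N" for n
      using that
    proof (induction n rule: dec_induct)
      case base
      then show ?case by simp
    next
      case (step n)
      have "\<bar>c n * u n\<bar> \<le> \<bar>u n\<bar>"
        using N[OF step.hyps(1)] by (simp add: abs_mult mult_left_le_one_le)
      then have "\<bar>u (Suc n)\<bar> \<le> \<bar>u n\<bar> + r / 2"
        using N[OF step.hyps(1)] by linarith
      moreover have "real (Suc n - N) * (r / 2) = real (n - N) * (r / 2) + r / 2"
        using step.hyps(1) by (simp add: Suc_diff_le distrib_right)
      ultimately show ?case using step.IH by linarith
    qed
    have small: "eventually (\<lambda>n. \<bar>u N\<bar> / real n < r / 2) sequentially"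
      using order_tendstoD(2)[OF lim_const_over_n[of "\<bar>u N\<bar>"], of "r / 2"] r by simp
    show ?thesis
      using small eventually_ge_at_top[of "Suc N"]
    proof eventually_elim
      case (elim n)
      then have n: "real n > 0" by simp
      have "real (n - N) * (r / 2) \<le> real n * (r / 2)"
        using r by (intro mult_right_mono) auto
      then have "\<bar>u n\<bar> \<le> \<bar>u N\<bar> + real n * (r / 2)"
        using growth[of n] elim(2) by linarith
      then have "\<bar>u n\<bar> / real n \<le> \<bar>u N\<bar> / real n + r / 2"
        using n by (simp add: field_simps)
      moreover have "\<bar>u n / real n\<bar> = \<bar>u n\<bar> / real n"
        using n by (simp add: abs_divide)
      ultimately show ?case
        using elim(1) by linarith
    qed
  qed
  then show ?thesis
    by (simp add: tendsto_iff dist_real_def)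
qed

text \<open>The deviation from the linear
  profile L (n + delta) satisfies a contracting recursion.\<close>
lemma linear_recursion_asymptotics:
  fixes a b :: "nat \<Rightarrow> real"
  assumes \<theta>: "\<theta> \<ge> 0" and \<delta>: "\<delta> > 0"
    and rec: "eventually (\<lambda>n. a (Suc n) = (1 - \<theta> / (real n + \<delta>)) * a n + b n) sequentially"
    and b: "b \<longlonglongrightarrow> \<beta>"
  shows "(\<lambda>n. a n / real n) \<longlonglongrightarrow> \<beta> / (1 + \<theta>)"
proof -
  define L where "L = \<beta> / (1 + \<theta>)"
  have L: "L * (1 + \<theta>) = \<beta>" unfolding L_def using \<theta> by simp
  define u where "u n = a n - L * (real n + \<delta>)" for n
  have large: "eventually (\<lambda>n. real n \<ge> \<theta>) sequentially"
    by (rule eventually_sequentiallyI[of "nat \<lceil>\<theta>\<rceil>"]) linarith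
  have "eventually (\<lambda>n. u (Suc n) = (1 - \<theta> / (real n + \<delta>)) * u n + (b n - \<beta>)
         \<and> \<bar>1 - \<theta> / (real n + \<delta>)\<bar> \<le> 1) sequentially"
    using rec large
  proof eventually_elim
    case (elim n)
    have pos: "real n + \<delta> > 0" using \<delta> by simp
    define x where "x = \<theta> / (real n + \<delta>)"
    have "x * (L * (real n + \<delta>)) = L * \<theta>" unfolding x_def using pos by simp
    then have "u (Suc n) = (1 - x) * u n + (b n - \<beta>)"
      using elim(1)[folded x_def] unfolding u_def L[symmetric] by (simp add: algebra_simps)
    moreover have "0 \<le> x" "x \<le> 1"
      unfolding x_def using \<theta> pos elim(2) \<delta> by simp_all
    ultimately show ?case by (simp add: x_def)
  qed
  moreover have "(\<lambda>n. b n - \<beta>) \<longlonglongrightarrow> 0" using b by (simp add: LIM_zero)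
  ultimately have "(\<lambda>n. u n / real n) \<longlonglongrightarrow> 0" by (rule contraction_recursion_sublinear)
  then have "(\<lambda>n. u n / real n + L * (1 + \<delta> / real n)) \<longlonglongrightarrow> 0 + L * (1 + 0)"
    by (intro tendsto_intros lim_const_over_n)
  moreover have "eventually (\<lambda>n. u n / real n + L * (1 + \<delta> / real n) = a n / real n) sequentially"
    by (rule eventually_sequentiallyI[of 1]) (simp add: u_def field_simps)
  ultimately have "(\<lambda>n. a n / real n) \<longlonglongrightarrow> 0 + L * (1 + 0)"
    by (rule Lim_transform_eventually)
  then show ?thesis by (simp add: L_def)
qed

lemma Gamma_plus1_pos: "(x::real) > 0 \<Longrightarrow> Gamma (x + 1) = x * Gamma x"
  by (rule Gamma_plus1) (auto dest: nonpos_Ints_nonpos)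

text \<open>x_1 = (1 + alpha)/(2 + alpha) and x_(j+1) = x_j j/(2 + alpha + j): the Gamma formula
  for x_i is the solution of this recursion, which is the form in which it is used.\<close>
lemma paa_limit_1:
  assumes "lam > 0"
  shows "paa_limit lam k 1 = (1 + real k / lam) / (2 + real k / lam)"
proof -
  define \<alpha> where "\<alpha> = real k / lam"
  have "\<alpha> \<ge> 0" unfolding \<alpha>_def using assms by simp
  then have "Gamma (2 + \<alpha> + 1) = (2 + \<alpha>) * Gamma (2 + \<alpha>)" and "Gamma (2 + \<alpha>) > 0"
    by (intro Gamma_plus1_pos, simp, simp)
  then show ?thesis unfolding paa_limit_def Let_def \<alpha>_def[symmetric] by simp
qed

lemma paa_limit_Suc:
  assumes "lam > 0" "j \<ge> 1"
  shows "paa_limit lam k (Suc j) = paa_limit lam k j * real j / (2 + real k / lam + real j)"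
proof -
  define \<alpha> where "\<alpha> = real k / lam"
  have \<alpha>: "\<alpha> \<ge> 0" unfolding \<alpha>_def using assms by simp
  have "Gamma (real (Suc j)) = real j * Gamma (real j)"
    using Gamma_plus1_pos[of "real j"] assms by (simp add: add.commute)
  moreover have "Gamma (2 + \<alpha> + real (Suc j)) = (2 + \<alpha> + real j) * Gamma (2 + \<alpha> + real j)"
    using Gamma_plus1_pos[of "2 + \<alpha> + real j"] \<alpha> by (simp add: add.assoc)
  moreover have "Gamma (2 + \<alpha> + real j) > 0" "2 + \<alpha> + real j > 0" using \<alpha> by simp_all
  ultimately show ?thesis unfolding paa_limit_def Let_def \<alpha>_def[symmetric]
    by (simp add: field_simps)
qed

text \<open>A Bernoulli distribution only depends on its parameter clamped to [0, 1].\<close>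
definition clamp01 :: "real \<Rightarrow> real" where "clamp01 x = min 1 (max 0 x)"

lemma bernoulli_pmf_clamp01: "bernoulli_pmf p = bernoulli_pmf (clamp01 p)"
  by (rule pmf_eqI) (simp add: bernoulli_pmf.rep_eq clamp01_def)

lemma clamp01_bounds: "0 \<le> clamp01 x" "clamp01 x \<le> 1"
  unfolding clamp01_def by auto

lemma E_map_bernoulli:
  "E (map_pmf f (bernoulli_pmf p)) h = h (f True) * clamp01 p + h (f False) * (1 - clamp01 p)"
  by (subst bernoulli_pmf_clamp01) (simp add: clamp01_bounds)

lemma num_score_as_sum: "real (num_score j t) = sum_list (map (\<lambda>x. if x = j then 1 else 0) t)"
  unfolding num_score_def by (induction t) auto

lemma sum_list_indicator:
  "sum_list (map (\<lambda>x. if x = j then (c::real) else 0) t) = c * real (num_score j t)"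
  unfolding num_score_def by (induction t) (auto simp: algebra_simps)

lemma num_score_append_new_books:
  "num_score j (s @ replicate k 1) = num_score j s + (if j = 1 then k else 0)"
  unfolding num_score_def by (induction k) auto

lemma square_subconvex_combination:
  fixes a b x y :: real
  assumes "0 \<le> a" "0 \<le> b" "a + b \<le> 1"
  shows "(a * x + b * y)\<^sup>2 \<le> a * x\<^sup>2 + b * y\<^sup>2"
proof -
  have "(a + b) * (a * x\<^sup>2 + b * y\<^sup>2) - (a * x + b * y)\<^sup>2 = a * b * (x - y)\<^sup>2"
    by (simp add: power2_eq_square algebra_simps)
  moreover have "a * b * (x - y)\<^sup>2 \<ge> 0" using assms by simp
  moreover have "(a + b) * (a * x\<^sup>2 + b * y\<^sup>2) \<le> a * x\<^sup>2 + b * y\<^sup>2"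
    using assms by (intro mult_left_le_one_le) auto
  ultimately show ?thesis by linarith
qed

text \<open>Mass leaving score j enters score j+1: summing the two-term recursion over
  j = 1..i telescopes, leaving only what leaves score i.\<close>
lemma telescoping_transfer:
  fixes Q a :: "nat \<Rightarrow> real"
  assumes "Q 0 = 0"
  shows "(\<Sum>j\<in>{1..i}. (1 - Q j) * a j + Q (j - 1) * a (j - 1)) = (\<Sum>j\<in>{1..i}. a j) - Q i * a i"
proof (induction i)
  case 0
  then show ?case using assms by simp
next
  case (Suc i)
  show ?case
  proof (cases "i = 0")
    case True
    then show ?thesis using assms by (simp add: algebra_simps)
  next
    case False
    have "{1..Suc i} = insert (Suc i) {1..i}" by auto
    then show ?thesis using Suc by (simp add: algebra_simps)
  qed
qed

section \<open>One step of the model\<close>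

locale paa =
  fixes lam :: real and k l :: nat
  assumes lam_pos: "lam > 0" and k_pos: "k \<ge> 1"
begin

abbreviation S :: "nat \<Rightarrow> nat list pmf" where "S n \<equiv> paa_state lam k l n"
abbreviation P :: "nat \<Rightarrow> nat list \<Rightarrow> nat list pmf" where "P n s \<equiv> paa_step lam k l n s"

definition D :: "nat \<Rightarrow> real" where "D n = real (l + (n + 1) * k) + real n * lam"
definition q :: "nat \<Rightarrow> nat \<Rightarrow> real" where "q n j = clamp01 (lam * real j / D n)"

definition coord :: "nat \<Rightarrow> nat \<Rightarrow> nat pmf" where
  "coord n sc = map_pmf (\<lambda>b. if b then sc + 1 else sc) (bernoulli_pmf (lam * real sc / D n))"

definition next_mean :: "nat \<Rightarrow> nat \<Rightarrow> nat list \<Rightarrow> real" where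
  "next_mean n j s = (real (num_score j s) + (if j = 1 then real k else 0)) * (1 - q n j)
     + (real (num_score (j - 1) s) + (if j = 2 then real k else 0)) * q n (j - 1)"

lemma D_pos: "D n > 0"
proof -
  have "l + (n + 1) * k \<ge> 1" using k_pos by simp
  then have "real (l + (n + 1) * k) \<ge> 1" by (metis of_nat_1 of_nat_le_iff)
  then show ?thesis unfolding D_def using lam_pos by (simp add: add_pos_nonneg)
qed

lemma q_zero: "q n 0 = 0"
  unfolding q_def clamp01_def by simp

lemma q_bounds: "0 \<le> q n j" "q n j \<le> 1"
  unfolding q_def by (simp_all add: clamp01_bounds)

lemma q_mono:
  assumes "j \<le> j'"
  shows "q n j \<le> q n j'"
proof -
  have "lam * real j / D n \<le> lam * real j' / D n"
    using assms D_pos[of n] lam_pos by (intro divide_right_mono mult_left_mono) auto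
  then show ?thesis unfolding q_def clamp01_def by auto
qed

lemma q_le: "q n j \<le> lam * real j / D n"
  unfolding q_def clamp01_def using D_pos[of n] lam_pos by auto

lemma step_as_product: "P n s = seq_pmf (map (coord n) (s @ replicate k 1))"
  unfolding paa_step_def D_def coord_def Let_def by simp

lemma coord_finite: "finite (set_pmf (coord n sc))"
  unfolding coord_def by simp

lemma step_finite: "finite (set_pmf (P n s))"
  unfolding step_as_product by (rule seq_pmf_finite) (auto simp: coord_finite)

lemma step_length: "t \<in> set_pmf (P n s) \<Longrightarrow> length t = length s + k"
  unfolding step_as_product by (drule seq_pmf_length) simp

lemma state_finite: "finite (set_pmf (S n))"
  by (induction n) (auto simp: step_finite)

lemma state_length: "s \<in> set_pmf (S n) \<Longrightarrow> length s = l + n * k"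
  by (induction n arbitrary: s) (auto dest: step_length)

lemma coord_expectation: "E (coord n sc) g = g (sc + 1) * q n sc + g sc * (1 - q n sc)"
  unfolding coord_def q_def E_map_bernoulli by simp

text \<open>The variance of "the book has score j" after one step is at most the probability that
  a book of score j-1 or j is downloaded.\<close>
lemma coord_variance_le:
  "E (coord n sc) (\<lambda>x. ((if x = j then 1 else 0) - E (coord n sc) (\<lambda>x. if x = j then 1 else 0))\<^sup>2)
     \<le> lam * real j / D n"
proof -
  define g :: "nat \<Rightarrow> real" where "g x = (if x = j then 1 else 0)" for x
  define c where "c = q n sc"
  have c: "0 \<le> c" "c \<le> 1" unfolding c_def using q_bounds by auto
  have variance: "E (coord n sc) (\<lambda>x. (g x - E (coord n sc) g)\<^sup>2) = c * (1 - c) * (g (sc + 1) - g sc)\<^sup>2"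
    unfolding coord_expectation c_def[symmetric] by (simp add: power2_eq_square algebra_simps)
  have "c * (1 - c) * (g (sc + 1) - g sc)\<^sup>2 \<le> lam * real j / D n"
  proof (cases "sc = j \<or> sc + 1 = j")
    case True
    then have "c \<le> lam * real j / D n"
      unfolding c_def using q_le[of n sc] q_mono[of sc j n] q_le[of n j] by auto
    moreover have "c * (1 - c) * (g (sc + 1) - g sc)\<^sup>2 \<le> c"
      using True c by (auto simp: g_def mult_left_le)
    ultimately show ?thesis by simp
  next
    case False
    then show ?thesis using lam_pos D_pos[of n] by (auto simp: g_def)
  qed
  then show ?thesis using variance unfolding g_def by simp
qed

lemma step_mean:
  assumes "j \<ge> 1"
  shows "E (P n s) (\<lambda>t. real (num_score j t)) = next_mean n j s"
proof -
  let ?g = "\<lambda>x. if x = j then 1 else (0::real)"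
  let ?s' = "s @ replicate k 1"
  have "E (P n s) (\<lambda>t. real (num_score j t)) = sum_list (map (\<lambda>sc. E (coord n sc) ?g) ?s')"
    unfolding num_score_as_sum step_as_product
    by (subst seq_pmf_mean) (auto simp: coord_finite o_def)
  also have "\<dots> = sum_list (map (\<lambda>sc. (if sc = j - 1 then q n (j - 1) else 0)
                      + (if sc = j then 1 - q n j else 0)) ?s')"
    using assms by (intro arg_cong[where f = sum_list] map_cong) (auto simp: coord_expectation)
  also have "\<dots> = q n (j - 1) * real (num_score (j - 1) ?s') + (1 - q n j) * real (num_score j ?s')"
    by (simp only: sum_list_addf sum_list_indicator)
  also have "\<dots> = next_mean n j s"
    unfolding next_mean_def num_score_append_new_books using assms by (auto simp: algebra_simps)
  finally show ?thesis .
qed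

text \<open>Conditional variance of the count of score j after one step is at most lam j: it is a sum
  of at most D n Bernoulli variances, each at most lam j / D n.\<close>
lemma step_variance_le:
  assumes "j \<ge> 1" "length s = l + n * k"
  shows "E (P n s) (\<lambda>t. (real (num_score j t) - next_mean n j s)\<^sup>2) \<le> lam * real j"
proof -
  let ?g = "\<lambda>x. if x = j then 1 else (0::real)"
  let ?s' = "s @ replicate k 1"
  have mean: "next_mean n j s = sum_list (map (\<lambda>p. E p ?g) (map (coord n) ?s'))"
    using step_mean[OF assms(1), of n s] unfolding step_as_product num_score_as_sum
    by (subst (asm) seq_pmf_mean) (auto simp: coord_finite)
  have "E (P n s) (\<lambda>t. (real (num_score j t) - next_mean n j s)\<^sup>2)
      = sum_list (map (\<lambda>p. E p (\<lambda>x. (?g x - E p ?g)\<^sup>2)) (map (coord n) ?s'))"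
    unfolding num_score_as_sum mean step_as_product by (rule seq_pmf_variance) (auto simp: coord_finite)
  also have "\<dots> \<le> sum_list (map (\<lambda>_. lam * real j / D n) ?s')"
    unfolding map_map o_def by (intro sum_list_mono coord_variance_le)
  also have "\<dots> = real (length ?s') * (lam * real j / D n)"
    by (simp only: sum_list_triv)
  also have "\<dots> \<le> lam * real j"
  proof -
    have "real (length ?s') \<le> D n"
      using assms(2) lam_pos unfolding D_def by (simp add: algebra_simps)
    then have "real (length ?s') / D n \<le> 1" using D_pos by simp
    then show ?thesis
      using lam_pos D_pos[of n] mult_left_le_one_le[of "lam * real j" "real (length ?s') / D n"]
      by simp
  qed
  finally show ?thesis .
qed

definition mean_count :: "nat \<Rightarrow> nat \<Rightarrow> real" where
  "mean_count n j = E (S n) (\<lambda>s. real (num_score j s))"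

definition var_count :: "nat \<Rightarrow> nat \<Rightarrow> real" where
  "var_count n j = E (S n) (\<lambda>s. (real (num_score j s) - mean_count n j)\<^sup>2)"

text \<open>The variances summed over the scores 1..i; unlike a single variance, this sum obeys a
  closed recursive bound because the transfer terms telescope.\<close>
definition var_upto :: "nat \<Rightarrow> nat \<Rightarrow> real" where
  "var_upto i n = (\<Sum>j\<in>{1..i}. var_count n j)"

lemma state_Suc_expectation: "E (S (Suc n)) h = E (S n) (\<lambda>s. E (P n s) h)"
  by (simp add: E_bind state_finite step_finite)

lemma mean_count_Suc:
  assumes "j \<ge> 1"
  shows "mean_count (Suc n) j = (mean_count n j + (if j = 1 then real k else 0)) * (1 - q n j)
     + (mean_count n (j - 1) + (if j = 2 then real k else 0)) * q n (j - 1)"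
proof -
  have "next_mean n j s = (1 - q n j) * real (num_score j s) + q n (j - 1) * real (num_score (j - 1) s)
     + ((if j = 1 then real k else 0) * (1 - q n j) + (if j = 2 then real k else 0) * q n (j - 1))"
    for s unfolding next_mean_def by (simp add: algebra_simps)
  then have "mean_count (Suc n) j = (1 - q n j) * mean_count n j + q n (j - 1) * mean_count n (j - 1)
      + ((if j = 1 then real k else 0) * (1 - q n j) + (if j = 2 then real k else 0) * q n (j - 1))"
    unfolding mean_count_def state_Suc_expectation step_mean[OF assms] by (simp add: E_affine state_finite)
  then show ?thesis by (simp add: algebra_simps)
qed

lemma var_count_nonneg: "var_count n j \<ge> 0"
  unfolding var_count_def by (rule integral_nonneg_AE) auto

text \<open>Law of total variance for one step: new fluctuations (at most lam j) plus the spread of the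
  conditional means, which by Jensen is at most the mixture of the old variances.\<close>
lemma var_count_Suc_le:
  assumes "j \<ge> 1"
  shows "var_count (Suc n) j \<le> lam * real j + (1 - q n j) * var_count n j + q n (j - 1) * var_count n (j - 1)"
proof -
  let ?c = "mean_count (Suc n) j"
  let ?X = "\<lambda>j s. real (num_score j s) - mean_count n j"
  have conditional: "E (P n s) (\<lambda>t. (real (num_score j t) - ?c)\<^sup>2)
       \<le> lam * real j + ((1 - q n j) * (?X j s)\<^sup>2 + q n (j - 1) * (?X (j - 1) s)\<^sup>2)"
    if s: "s \<in> set_pmf (S n)" for s
  proof -
    let ?m = "next_mean n j s"
    have centred: "E (P n s) (\<lambda>t. real (num_score j t) - ?m) = 0"
      using step_mean[OF assms] by (simp add: E_diff step_finite)
    have "E (P n s) (\<lambda>t. (real (num_score j t) - ?c)\<^sup>2)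
       = E (P n s) (\<lambda>t. (real (num_score j t) - ?m)\<^sup>2 + (2 * (?m - ?c)) * (real (num_score j t) - ?m)
             + (?m - ?c)\<^sup>2)"
      by (simp add: power2_eq_square algebra_simps)
    also have "\<dots> = E (P n s) (\<lambda>t. (real (num_score j t) - ?m)\<^sup>2) + (?m - ?c)\<^sup>2"
      using centred by (simp add: E_add step_finite)
    also have "\<dots> \<le> lam * real j + (?m - ?c)\<^sup>2"
      using step_variance_le[OF assms state_length[OF s]] by simp
    also have "?m - ?c = (1 - q n j) * ?X j s + q n (j - 1) * ?X (j - 1) s"
      unfolding next_mean_def mean_count_Suc[OF assms] by (simp add: algebra_simps)
    also have "((1 - q n j) * ?X j s + q n (j - 1) * ?X (j - 1) s)\<^sup>2
        \<le> (1 - q n j) * (?X j s)\<^sup>2 + q n (j - 1) * (?X (j - 1) s)\<^sup>2"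
      using q_bounds[of n j] q_bounds[of n "j - 1"] q_mono[of "j - 1" j n]
      by (intro square_subconvex_combination) auto
    finally show ?thesis by simp
  qed
  have "var_count (Suc n) j = E (S n) (\<lambda>s. E (P n s) (\<lambda>t. (real (num_score j t) - ?c)\<^sup>2))"
    unfolding var_count_def state_Suc_expectation ..
  also have "\<dots> \<le> E (S n) (\<lambda>s. (1 - q n j) * (?X j s)\<^sup>2 + q n (j - 1) * (?X (j - 1) s)\<^sup>2 + lam * real j)"
    using conditional by (intro E_mono[OF state_finite]) (simp add: algebra_simps)
  also have "\<dots> = (1 - q n j) * var_count n j + q n (j - 1) * var_count n (j - 1) + lam * real j"
    unfolding var_count_def by (rule E_affine[OF state_finite])
  finally show ?thesis by simp
qed

lemma var_upto_Suc_le: "var_upto i (Suc n) \<le> var_upto i n + real i * (lam * real i)"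
proof -
  have "var_upto i (Suc n)
      \<le> (\<Sum>j\<in>{1..i}. lam * real j + ((1 - q n j) * var_count n j + q n (j - 1) * var_count n (j - 1)))"
    unfolding var_upto_def using var_count_Suc_le by (intro sum_mono) (simp add: algebra_simps)
  also have "\<dots> = (\<Sum>j\<in>{1..i}. lam * real j) + (var_upto i n - q n i * var_count n i)"
    unfolding var_upto_def using telescoping_transfer[of "q n" "var_count n" i]
    by (simp add: q_zero sum.distrib)
  also have "\<dots> \<le> real i * (lam * real i) + var_upto i n"
  proof -
    have "(\<Sum>j\<in>{1..i}. lam * real j) \<le> (\<Sum>j\<in>{1..i}. lam * real i)"
      using lam_pos by (intro sum_mono) auto
    moreover have "q n i * var_count n i \<ge> 0"
      using q_bounds(1)[of n i] var_count_nonneg[of n i] by simp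
    ultimately show ?thesis by simp
  qed
  finally show ?thesis by simp
qed

lemma var_upto_le: "var_upto i n \<le> real n * (real i * (lam * real i))"
proof (induction n)
  case 0
  then show ?case by (simp add: var_upto_def var_count_def mean_count_def)
next
  case (Suc n)
  then show ?case using var_upto_Suc_le[of i n] by (simp add: algebra_simps)
qed

lemma var_count_normalised_tendsto_zero:
  assumes "i \<ge> 1"
  shows "(\<lambda>n. var_count n i / (real n * real k)\<^sup>2) \<longlonglongrightarrow> 0"
proof -
  define C where "C = real i * (lam * real i) / (real k)\<^sup>2"
  have "eventually (\<lambda>n. var_count n i / (real n * real k)\<^sup>2 \<le> C / real n) sequentially"
    using eventually_gt_at_top[of 0]
  proof eventually_elim
    case (elim n)
    have "var_count n i \<le> var_upto i n"
      unfolding var_upto_def using assms var_count_nonneg by (intro member_le_sum) auto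
    also have "\<dots> \<le> real n * (real i * (lam * real i))" by (rule var_upto_le)
    finally have "var_count n i / (real n * real k)\<^sup>2
        \<le> real n * (real i * (lam * real i)) / (real n * real k)\<^sup>2"
      by (simp add: divide_right_mono)
    also have "\<dots> = C / real n"
      using elim by (simp add: C_def power2_eq_square field_simps)
    finally show ?case .
  qed
  moreover have "eventually (\<lambda>n. 0 \<le> var_count n i / (real n * real k)\<^sup>2) sequentially"
    by (simp add: var_count_nonneg)
  ultimately show ?thesis
    by (intro tendsto_sandwich[OF _ _ tendsto_const lim_const_over_n]) auto
qed

section \<open>Asymptotics of the mean counts\<close>

text \<open>For n >= j the download probability is exactly rate j / (n + offset).\<close>
definition rate :: "nat \<Rightarrow> real" where "rate j = lam * real j / (real k + lam)"
definition offset :: real where "offset = (real l + real k) / (real k + lam)"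

lemma rate_nonneg: "rate j \<ge> 0"
  unfolding rate_def using lam_pos by simp

lemma offset_pos: "offset > 0"
  unfolding offset_def using k_pos lam_pos by (simp add: add_pos_nonneg)

lemma q_eq:
  assumes "n \<ge> j"
  shows "q n j = rate j / (real n + offset)"
proof -
  have "lam * real j \<le> lam * real n" using assms lam_pos by simp
  also have "\<dots> \<le> D n" unfolding D_def by simp
  finally have "lam * real j / D n \<le> 1" using D_pos[of n] by simp
  then have "q n j = lam * real j / D n"
    unfolding q_def clamp01_def using lam_pos D_pos[of n] by simp
  moreover have "D n = (real k + lam) * (real n + offset)"
    unfolding D_def offset_def using lam_pos by (simp add: field_simps)
  ultimately show ?thesis unfolding rate_def using lam_pos by (simp add: field_simps)
qed

lemma q_tendsto_zero: "(\<lambda>n. q n j) \<longlonglongrightarrow> 0"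
proof -
  have "(\<lambda>n. (rate j / real n) / (1 + offset / real n)) \<longlonglongrightarrow> 0 / (1 + 0)"
    by (intro tendsto_intros) auto
  moreover have "eventually (\<lambda>n. (rate j / real n) / (1 + offset / real n) = q n j) sequentially"
    using eventually_ge_at_top[of "Suc j"]
    by eventually_elim (use q_eq offset_pos in \<open>simp add: field_simps\<close>)
  ultimately show ?thesis by (simp add: Lim_transform_eventually)
qed

lemma n_times_q_tendsto: "(\<lambda>n. real n * q n j) \<longlonglongrightarrow> rate j"
proof -
  have "(\<lambda>n. rate j / (1 + offset / real n)) \<longlonglongrightarrow> rate j / (1 + 0)"
    by (intro tendsto_intros) auto
  moreover have "eventually (\<lambda>n. rate j / (1 + offset / real n) = real n * q n j) sequentially"
    using eventually_ge_at_top[of "Suc j"]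
    by eventually_elim (use q_eq offset_pos in \<open>simp add: field_simps\<close>)
  ultimately show ?thesis by (simp add: Lim_transform_eventually)
qed

text \<open>The limits k x_j are the fixed points of the mean recursion.\<close>
lemma limit_fixed_point_1: "real k / (1 + rate 1) = real k * paa_limit lam k 1"
proof -
  have "1 + rate 1 = (real k + 2 * lam) / (real k + lam)"
    unfolding rate_def using lam_pos by (simp add: field_simps)
  moreover have "1 + real k / lam = (real k + lam) / lam" "2 + real k / lam = (real k + 2 * lam) / lam"
    using lam_pos by (simp_all add: field_simps)
  ultimately show ?thesis unfolding paa_limit_1[OF lam_pos] using lam_pos by simp
qed

lemma limit_fixed_point_Suc:
  assumes "j \<ge> 1"
  shows "real k * paa_limit lam k j * rate j / (1 + rate (Suc j)) = real k * paa_limit lam k (Suc j)"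
proof -
  define Z where "Z = real k + 2 * lam + lam * real j"
  have kl: "real k + lam > 0" using lam_pos by simp
  have Z: "Z > 0" unfolding Z_def using lam_pos by (simp add: add_pos_nonneg)
  have rate_Suc: "1 + rate (Suc j) = Z / (real k + lam)"
    unfolding rate_def Z_def using kl by (simp add: field_simps)
  have "real k * paa_limit lam k j * rate j / (1 + rate (Suc j))
      = real k * paa_limit lam k j * (lam * real j) / Z"
    unfolding rate_Suc unfolding rate_def using kl Z by simp
  also have "\<dots> = real k * (paa_limit lam k j * real j / (Z / lam))"
    using lam_pos by simp
  also have "Z / lam = 2 + real k / lam + real j"
    unfolding Z_def using lam_pos by (simp add: field_simps)
  finally show ?thesis unfolding paa_limit_Suc[OF lam_pos assms] .
qed

text \<open>The mean number of books of score j grows like k x_j n.  Induction on j: the count of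
  score j is fed by the count of score j-1 (or by the k new books, for j = 1).\<close>
lemma mean_count_asymptotics:
  assumes "j \<ge> 1"
  shows "(\<lambda>n. mean_count n j / real n) \<longlonglongrightarrow> real k * paa_limit lam k j"
  using assms
proof (induction j rule: nat_induct_at_least)
  case base
  have "eventually (\<lambda>n. mean_count (Suc n) 1
      = (1 - rate 1 / (real n + offset)) * mean_count n 1 + real k * (1 - q n 1)) sequentially"
    using eventually_ge_at_top[of 1]
    by eventually_elim (simp add: mean_count_Suc q_eq q_zero algebra_simps add_divide_distrib)
  moreover have "(\<lambda>n. real k * (1 - q n 1)) \<longlonglongrightarrow> real k * (1 - 0)"
    by (intro tendsto_intros q_tendsto_zero)
  ultimately have "(\<lambda>n. mean_count n 1 / real n) \<longlonglongrightarrow> real k * (1 - 0) / (1 + rate 1)"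
    by (rule linear_recursion_asymptotics[OF rate_nonneg offset_pos])
  then show ?case using limit_fixed_point_1 by simp
next
  case (Suc j)
  define c where "c = (if Suc j = 2 then real k else 0)"
  have "eventually (\<lambda>n. mean_count (Suc n) (Suc j)
      = (1 - rate (Suc j) / (real n + offset)) * mean_count n (Suc j)
        + ((mean_count n j / real n) * (real n * q n j) + c * q n j)) sequentially"
    using eventually_ge_at_top[of "Suc j"]
    by eventually_elim (use Suc.hyps in \<open>simp add: mean_count_Suc q_eq c_def algebra_simps\<close>)
  moreover have "(\<lambda>n. (mean_count n j / real n) * (real n * q n j) + c * q n j)
      \<longlonglongrightarrow> real k * paa_limit lam k j * rate j + c * 0"
    by (intro tendsto_intros Suc.IH n_times_q_tendsto q_tendsto_zero)
  ultimately have "(\<lambda>n. mean_count n (Suc j) / real n)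
      \<longlonglongrightarrow> (real k * paa_limit lam k j * rate j + c * 0) / (1 + rate (Suc j))"
    by (rule linear_recursion_asymptotics[OF rate_nonneg offset_pos])
  then show ?case using limit_fixed_point_Suc[OF Suc.hyps] by simp
qed

end

theorem mainTheorem3:
  fixes lam :: real and k l i :: nat
  assumes "lam > 0" and "k \<ge> 1" and "lam \<le> real (k + l)" and "i \<ge> 1"
  shows "\<forall>\<epsilon>>0. (\<lambda>n. measure_pmf.prob (paa_state lam k l n)
            {s. \<bar>real (num_score i s) / (real n * real k) - paa_limit lam k i\<bar> > \<epsilon>})
          \<longlonglongrightarrow> 0"
proof (intro allI impI)
  fix \<epsilon> :: real
  assume \<epsilon>: "\<epsilon> > 0"
  interpret paa lam k l using assms by unfold_locales auto
  have k: "real k > 0" using assms by simp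
  have "(\<lambda>n. mean_count n i / real n / real k) \<longlonglongrightarrow> real k * paa_limit lam k i / real k"
    by (intro tendsto_intros mean_count_asymptotics assms) (use k in simp)
  then have mean: "(\<lambda>n. mean_count n i / (real n * real k)) \<longlonglongrightarrow> paa_limit lam k i"
    using k by simp
  have scale: "eventually (\<lambda>n. real n * real k > 0) sequentially"
    using eventually_gt_at_top[of 0] by eventually_elim (use k in simp)
  show "(\<lambda>n. measure_pmf.prob (S n)
      {s. \<bar>real (num_score i s) / (real n * real k) - paa_limit lam k i\<bar> > \<epsilon>}) \<longlonglongrightarrow> 0"
    using second_moment_method_convergence[OF state_finite scale _ _ \<epsilon>]
      mean var_count_normalised_tendsto_zero[OF assms(4)]
    unfolding mean_count_def var_count_def by simp
qed

end
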